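(* For each integer $k\geq 2$ there is a finite algebra $\mathbf{A}$ with a $1$-pointed $k$-cube term whose growth rate satisfies $d_{\mathbf{A}}(n)\in \Theta(n^{k-1})$.
   Context: An algebra $\mathbf{A}$ has a $1$-pointed $k$-cube term if there is a term $F(x_1,\dots,x_m)$ in the language of $\mathbf{A}$ and a $k\times m$ matrix $M=[y_{i,j}]$ whose entries are variables and exactly one constant symbol (a nullary operation symbol of the language) such that every column of $M$ contains an entry different from the variable $x$ and the identities $F(y_{i,1},\dots,y_{i,m})\approx x$, $i=1,\dots,k$, hold in $\mathbf{A}$. $d_{\mathbf{A}}(n)$ is the least size of a generating set of $\mathbf{A}^n$. *)

theory Defs
  imports Main "HOL-Library.Landau_Symbols"
begin

datatype (syms: 's, vars: 'v) trm = Var 'v | Fn 's "('s, 'v) trm list"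

text \<open>Nullary symbols are the constant symbols.\<close>
definition is_algebra :: "'a set \<Rightarrow> 's set \<Rightarrow> ('s \<Rightarrow> nat) \<Rightarrow> ('s \<Rightarrow> 'a list \<Rightarrow> 'a) \<Rightarrow> bool" where
  "is_algebra A Sig ar op \<longleftrightarrow> A \<noteq> {} \<and>
     (\<forall>f\<in>Sig. \<forall>xs. length xs = ar f \<and> set xs \<subseteq> A \<longrightarrow> op f xs \<in> A)"

fun wf_trm :: "'s set \<Rightarrow> ('s \<Rightarrow> nat) \<Rightarrow> ('s, 'v) trm \<Rightarrow> bool" where
  "wf_trm Sig ar (Var v) = True"
| "wf_trm Sig ar (Fn f ts) = (f \<in> Sig \<and> length ts = ar f \<and> (\<forall>t\<in>set ts. wf_trm Sig ar t))"

fun eval_trm :: "('s \<Rightarrow> 'a list \<Rightarrow> 'a) \<Rightarrow> ('v \<Rightarrow> 'a) \<Rightarrow> ('s, 'v) trm \<Rightarrow> 'a" where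
  "eval_trm op \<rho> (Var v) = \<rho> v"
| "eval_trm op \<rho> (Fn f ts) = op f (map (eval_trm op \<rho>) ts)"

definition has_1pointed_cube_term ::
  "nat \<Rightarrow> 'a set \<Rightarrow> 's set \<Rightarrow> ('s \<Rightarrow> nat) \<Rightarrow> ('s \<Rightarrow> 'a list \<Rightarrow> 'a) \<Rightarrow> bool" where
  "has_1pointed_cube_term k A Sig ar op \<longleftrightarrow>
     (\<exists>(F :: ('s, nat) trm) (m :: nat) (c :: 's) (M :: nat \<Rightarrow> nat \<Rightarrow> ('s, nat) trm) (x :: nat).
        c \<in> Sig \<and> ar c = 0 \<and>
        wf_trm Sig ar F \<and> vars F \<subseteq> {..<m} \<and>
        (\<forall>i<k. \<forall>j<m. M i j = Fn c [] \<or> (\<exists>v. M i j = Var v)) \<and>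
        (\<forall>j<m. \<exists>i<k. M i j \<noteq> Var x) \<and>
        (\<forall>i<k. \<forall>\<rho>. (\<forall>v. \<rho> v \<in> A) \<longrightarrow>
            eval_trm op (\<lambda>j. eval_trm op \<rho> (M i j)) F = \<rho> x))"

definition power_carrier :: "'a set \<Rightarrow> nat \<Rightarrow> 'a list set" where
  "power_carrier A n = {v. length v = n \<and> set v \<subseteq> A}"

inductive_set generated :: "'s set \<Rightarrow> ('s \<Rightarrow> nat) \<Rightarrow> ('s \<Rightarrow> 'a list \<Rightarrow> 'a) \<Rightarrow> nat \<Rightarrow> 'a list set \<Rightarrow> 'a list set"
  for Sig ar op n S where
  gen_base: "v \<in> S \<Longrightarrow> v \<in> generated Sig ar op n S"
| gen_op: "\<lbrakk>f \<in> Sig; length vs = ar f; \<forall>u\<in>set vs. u \<in> generated Sig ar op n S\<rbrakk>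
     \<Longrightarrow> map (\<lambda>i. op f (map (\<lambda>v. v ! i) vs)) [0..<n] \<in> generated Sig ar op n S"

definition d_gen :: "'a set \<Rightarrow> 's set \<Rightarrow> ('s \<Rightarrow> nat) \<Rightarrow> ('s \<Rightarrow> 'a list \<Rightarrow> 'a) \<Rightarrow> nat \<Rightarrow> nat" where
  "d_gen A Sig ar op n = (LEAST c. \<exists>S. S \<subseteq> power_carrier A n \<and> finite S \<and> card S = c \<and>
                                     generated Sig ar op n S = power_carrier A n)"

end

theory Submission
  imports Defs
begin

text \<open>The algebra lives on \<open>{0,1,2}\<close> with the constant \<open>0\<close> and one \<open>k\<close>-ary operation \<open>f\<close>
  that is \<open>0\<close> on the all-zero tuple, \<open>1\<close> on the other tuples with at most one entry
  different from \<open>1\<close>, and \<open>2\<close> otherwise. Then \<open>f(x,\<dots>,x,0,x,\<dots>,x) = x\<close> is a 1-pointed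
  \<open>k\<close>-cube term. Zeroing in turn \<open>k\<close> nonzero coordinates of a vector and applying \<open>f\<close>
  recovers the vector, so the \<open>O(n^(k - 1))\<close> vectors with at most \<open>k - 1\<close> nonzero entries
  generate \<open>A\<^sup>n\<close>. Conversely, \<open>f\<close> cannot produce the characteristic vector of a
  \<open>(k - 1)\<close>-set \<open>T\<close> from other vectors: each argument would have to deviate from it by an
  entry \<open>\<noteq> 1\<close> inside \<open>T\<close>, and by pigeonhole two arguments do so at the same coordinate,
  where \<open>f\<close> would then give \<open>2\<close>. So every generating set contains all
  \<open>n choose (k - 1)\<close> of these vectors.\<close>

definition pointwise :: "('s \<Rightarrow> 'a list \<Rightarrow> 'a) \<Rightarrow> 's \<Rightarrow> nat \<Rightarrow> 'a list list \<Rightarrow> 'a list" where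
  "pointwise op f n vs = map (\<lambda>i. op f (map (\<lambda>v. v ! i) vs)) [0..<n]"

lemma length_pointwise [simp]: "length (pointwise op f n vs) = n"
  by (simp add: pointwise_def)

lemma nth_pointwise [simp]: "i < n \<Longrightarrow> pointwise op f n vs ! i = op f (map (\<lambda>v. v ! i) vs)"
  by (simp add: pointwise_def)

lemma pointwise_in_generated:
  "f \<in> Sig \<Longrightarrow> length vs = ar f \<Longrightarrow> set vs \<subseteq> generated Sig ar op n S
    \<Longrightarrow> pointwise op f n vs \<in> generated Sig ar op n S"
  unfolding pointwise_def by (rule gen_op) auto

lemma finite_power_carrier: "finite A \<Longrightarrow> finite (power_carrier A n)"
  using finite_lists_length_eq[of A n] by (simp add: power_carrier_def conj_commute)

lemma generated_subset_power_carrier: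
  assumes "is_algebra A Sig ar op" and "S \<subseteq> power_carrier A n"
  shows "generated Sig ar op n S \<subseteq> power_carrier A n"
proof
  fix v assume "v \<in> generated Sig ar op n S"
  then show "v \<in> power_carrier A n"
  proof induction
    case (gen_base v)
    then show ?case using assms(2) by blast
  next
    case (gen_op f vs)
    have "set (map (\<lambda>v. v ! i) vs) \<subseteq> A" if "i < n" for i
      using gen_op.IH that by (auto simp: power_carrier_def) (metis in_mono nth_mem)
    then have "op f (map (\<lambda>v. v ! i) vs) \<in> A" if "i < n" for i
      using assms(1) gen_op.hyps(1,2) that unfolding is_algebra_def by simp
    then show ?case by (auto simp: power_carrier_def)
  qed
qed

lemma generated_power_carrier:
  assumes "is_algebra A Sig ar op"
  shows "generated Sig ar op n (power_carrier A n) = power_carrier A n"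
  using generated_subset_power_carrier[OF assms order_refl] gen_base by blast

lemma d_gen_le_card:
  assumes "S \<subseteq> power_carrier A n" "finite S" "generated Sig ar op n S = power_carrier A n"
  shows "d_gen A Sig ar op n \<le> card S"
  unfolding d_gen_def using assms by (intro Least_le) blast

lemma d_gen_attained:
  assumes "finite A" "is_algebra A Sig ar op"
  obtains S where "S \<subseteq> power_carrier A n" "finite S" "card S = d_gen A Sig ar op n"
    "generated Sig ar op n S = power_carrier A n"
proof -
  let ?P = "\<lambda>c. \<exists>S. S \<subseteq> power_carrier A n \<and> finite S \<and> card S = c \<and>
                   generated Sig ar op n S = power_carrier A n"
  have "?P (card (power_carrier A n))"
    using finite_power_carrier[OF assms(1)] generated_power_carrier[OF assms(2)] by blast
  then have "?P (d_gen A Sig ar op n)"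
    unfolding d_gen_def by (rule LeastI)
  then show ?thesis using that by blast
qed

lemma card_le_d_gen:
  assumes "finite A" "is_algebra A Sig ar op"
    and "\<And>S. S \<subseteq> power_carrier A n \<Longrightarrow> generated Sig ar op n S = power_carrier A n \<Longrightarrow> W \<subseteq> S"
  shows "card W \<le> d_gen A Sig ar op n"
proof -
  obtain S where "S \<subseteq> power_carrier A n" "finite S" "card S = d_gen A Sig ar op n"
    "generated Sig ar op n S = power_carrier A n"
    using d_gen_attained[OF assms(1,2)] .
  then show ?thesis using assms(3) card_mono by metis
qed

lemma mem_generating_set_if_not_pointwise:
  assumes "w \<in> generated Sig ar op n S"
    and "\<And>f vs. f \<in> Sig \<Longrightarrow> length vs = ar f \<Longrightarrow> set vs \<subseteq> generated Sig ar op n S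
           \<Longrightarrow> w \<notin> set vs \<Longrightarrow> pointwise op f n vs \<noteq> w"
  shows "w \<in> S"
proof -
  have "v = w \<Longrightarrow> w \<in> S" if "v \<in> generated Sig ar op n S" for v
    using that
  proof induction
    case (gen_base v)
    then show ?case by simp
  next
    case (gen_op f vs)
    then show ?case
      using assms(2)[of f vs] unfolding pointwise_def by blast
  qed
  then show ?thesis using assms(1) by blast
qed

definition sparse_vectors :: "'a set \<Rightarrow> 'a \<Rightarrow> nat \<Rightarrow> nat \<Rightarrow> 'a list set" where
  "sparse_vectors A z m n = {v \<in> power_carrier A n. card {i. i < n \<and> v ! i \<noteq> z} \<le> m}"

lemma card_sparse_vectors_le:
  assumes "finite A"
  shows "card (sparse_vectors A z m n) \<le> (card A * n + 1) ^ m"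
proof -
  \<comment> \<open>a sparse vector is encoded by the list of its nonzero entries (position, value), padded with \<open>None\<close>\<close>
  define Entries where "Entries = insert None (Some ` ({..<n} \<times> A))"
  define Codes where "Codes = {xs. set xs \<subseteq> Entries \<and> length xs = m}"
  define decode :: "(nat \<times> 'a) option list \<Rightarrow> 'a list" where
    "decode xs = map (\<lambda>i. if \<exists>a. Some (i, a) \<in> set xs then (THE a. Some (i, a) \<in> set xs) else z) [0..<n]"
    for xs
  have "card Entries = card A * n + 1"
    using assms by (simp add: Entries_def card_image card_cartesian_product card_insert_if)
  then have card_Codes: "card Codes = (card A * n + 1) ^ m"
    unfolding Codes_def using assms by (simp add: card_lists_length_eq Entries_def)
  have "sparse_vectors A z m n \<subseteq> decode ` Codes"
  proof
    fix v assume v: "v \<in> sparse_vectors A z m n"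
    define N where "N = {i. i < n \<and> v ! i \<noteq> z}"
    have len: "length v = n" and set_v: "set v \<subseteq> A" and card_N: "card N \<le> m"
      using v by (auto simp: sparse_vectors_def power_carrier_def N_def)
    define xs where
      "xs = map (\<lambda>i. Some (i, v ! i)) (sorted_list_of_set N) @ replicate (m - card N) None"
    have Some_in_xs: "Some (i, a) \<in> set xs \<longleftrightarrow> i \<in> N \<and> a = v ! i" for i a
      by (auto simp: xs_def N_def)
    have "xs \<in> Codes"
      using card_N set_v len by (auto simp: Codes_def Entries_def xs_def N_def intro: nth_mem)
    moreover have "decode xs = v"
      by (rule nth_equalityI) (auto simp: decode_def Some_in_xs len N_def)
    ultimately show "v \<in> decode ` Codes" by blast
  qed
  moreover have "finite Codes"
    using assms by (simp add: Codes_def Entries_def finite_lists_length_eq)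
  ultimately have "card (sparse_vectors A z m n) \<le> card (decode ` Codes)"
    by (intro card_mono) simp_all
  also have "\<dots> \<le> card Codes" using \<open>finite Codes\<close> by (rule card_image_le)
  finally show ?thesis using card_Codes by simp
qed

lemma bigtheta_power_if_binomial_bounds:
  fixes d :: "nat \<Rightarrow> nat"
  assumes "\<And>n. n choose m \<le> d n" and "\<And>n. d n \<le> (a * n + 1) ^ m"
  shows "(\<lambda>n. real (d n)) \<in> \<Theta>(\<lambda>n. real n ^ m)"
proof (rule bigthetaI')
  show "1 / real m ^ m > 0" "real (a + 1) ^ m > 0" by auto
  show "\<forall>\<^sub>F n in at_top. 1 / real m ^ m * norm (real n ^ m) \<le> norm (real (d n)) \<and>
          norm (real (d n)) \<le> real (a + 1) ^ m * norm (real n ^ m)"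
  proof (rule eventually_at_top_linorder[THEN iffD2], intro exI allI impI)
    fix n assume n: "n \<ge> max m 1"
    have "1 / real m ^ m * real n ^ m = (real n / real m) ^ m"
      by (simp add: power_divide)
    also have "\<dots> \<le> real (n choose m)"
      using n by (intro binomial_ge_n_over_k_pow_k) simp
    also have "\<dots> \<le> real (d n)" using assms(1) by simp
    finally have lower: "1 / real m ^ m * real n ^ m \<le> real (d n)" .
    have "real (d n) \<le> real ((a * n + 1) ^ m)" using assms(2) by (simp only: of_nat_le_iff)
    also have "\<dots> \<le> real (((a + 1) * n) ^ m)"
      using n by (intro of_nat_mono power_mono) auto
    also have "\<dots> = real (a + 1) ^ m * real n ^ m"
      by (simp only: of_nat_power of_nat_mult power_mult_distrib)
    finally have upper: "real (d n) \<le> real (a + 1) ^ m * real n ^ m" .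
    show "1 / real m ^ m * norm (real n ^ m) \<le> norm (real (d n)) \<and>
          norm (real (d n)) \<le> real (a + 1) ^ m * norm (real n ^ m)"
      using lower upper by simp
  qed
qed

definition cube_fn :: "nat list \<Rightarrow> nat" where
  "cube_fn xs = (if \<forall>x\<in>set xs. x = 0 then 0
                 else if length (filter (\<lambda>x. x \<noteq> 1) xs) \<le> 1 then 1 else 2)"

definition cube_ar :: "nat \<Rightarrow> nat \<Rightarrow> nat" where
  "cube_ar k s = (if s = 0 then 0 else k)"

definition cube_op :: "nat \<Rightarrow> nat list \<Rightarrow> nat" where
  "cube_op s xs = (if s = 0 then 0 else cube_fn xs)"

lemma is_algebra_cube: "is_algebra {0,1,2} {0,1} (cube_ar k) cube_op"
  by (simp add: is_algebra_def cube_op_def cube_fn_def)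

lemma cube_fn_one_hole:
  assumes "a \<in> {0,1,2}" "2 \<le> length xs" "set xs \<subseteq> {0, a}"
    and "\<forall>j<length xs. j \<noteq> h \<longrightarrow> xs ! j = a"
  shows "cube_fn xs = a"
proof (cases "a = 0")
  case True
  then show ?thesis using assms(3) by (auto simp: cube_fn_def)
next
  case False
  define j where "j = (if h = 0 then 1 else 0 :: nat)"
  have "j < length xs" "j \<noteq> h" using assms(2) by (auto simp: j_def)
  then have "xs ! j = a" "xs ! j \<in> set xs" using assms(4) by auto
  then have not_all_zero: "\<not> (\<forall>x\<in>set xs. x = 0)" using False by auto
  show ?thesis
  proof (cases "a = 1")
    case True
    have "{i. i < length xs \<and> xs ! i \<noteq> 1} \<subseteq> {h}" using assms(4) True by auto
    then have "card {i. i < length xs \<and> xs ! i \<noteq> 1} \<le> card {h}"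
      by (rule card_mono[rotated]) simp
    then have "length (filter (\<lambda>x. x \<noteq> 1) xs) \<le> 1"
      by (simp add: length_filter_conv_card)
    then show ?thesis using not_all_zero True by (simp add: cube_fn_def)
  next
    case False
    then have "a = 2" using \<open>a \<noteq> 0\<close> assms(1) by simp
    then have "filter (\<lambda>x. x \<noteq> 1) xs = xs"
      unfolding filter_id_conv using assms(3) by auto
    then show ?thesis using not_all_zero assms(2) \<open>a = 2\<close> by (simp add: cube_fn_def)
  qed
qed

lemma has_1pointed_cube_term_cube:
  assumes "2 \<le> k"
  shows "has_1pointed_cube_term k {0,1,2} {0,1} (cube_ar k) cube_op"
  unfolding has_1pointed_cube_term_def
proof (intro exI conjI)
  let ?F = "Fn (1::nat) (map Var [0..<k]) :: (nat, nat) trm"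
  let ?M = "\<lambda>i j. if j = i then Fn (0::nat) [] else Var 0 :: (nat, nat) trm"
  show "wf_trm {0,1} (cube_ar k) ?F" by (simp add: cube_ar_def)
  show "vars ?F \<subseteq> {..<k}" by auto
  show "\<forall>i<k. \<forall>j<k. ?M i j = Fn 0 [] \<or> (\<exists>v. ?M i j = Var v)" by auto
  show "\<forall>j<k. \<exists>i<k. ?M i j \<noteq> Var 0" by auto
  show "\<forall>i<k. \<forall>\<rho>. (\<forall>v. \<rho> v \<in> {0,1,2}) \<longrightarrow>
          eval_trm cube_op (\<lambda>j. eval_trm cube_op \<rho> (?M i j)) ?F = \<rho> 0"
  proof (intro allI impI)
    fix i and \<rho> :: "nat \<Rightarrow> nat" assume "i < k" and "\<forall>v. \<rho> v \<in> {0,1,2}"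
    have "eval_trm cube_op (\<lambda>j. eval_trm cube_op \<rho> (?M i j)) ?F
            = cube_fn (map (\<lambda>j. eval_trm cube_op \<rho> (?M i j)) [0..<k])"
      by (simp add: cube_op_def comp_def)
    also have "\<dots> = cube_fn (map (\<lambda>j. if j = i then 0 else \<rho> 0) [0..<k])"
      by (rule arg_cong[where f = cube_fn]) (simp add: cube_op_def)
    also have "\<dots> = \<rho> 0"
      using assms \<open>i < k\<close> \<open>\<forall>v. \<rho> v \<in> {0,1,2}\<close>
      by (intro cube_fn_one_hole[where h = i]) auto
    finally show "eval_trm cube_op (\<lambda>j. eval_trm cube_op \<rho> (?M i j)) ?F = \<rho> 0" .
  qed
qed (simp_all add: cube_ar_def)

lemma pointwise_cube_zero_out:
  assumes "2 \<le> k" "distinct cs" "length cs = k" "length v = n" "set v \<subseteq> {0,1,2}"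
  shows "pointwise cube_op 1 n (map (\<lambda>j. v[cs ! j := 0]) [0..<k]) = v"
proof (rule nth_equalityI)
  fix i assume "i < length (pointwise cube_op 1 n (map (\<lambda>j. v[cs ! j := 0]) [0..<k]))"
  then have i: "i < n" by simp
  have column: "map (\<lambda>u. u ! i) (map (\<lambda>j. v[cs ! j := 0]) [0..<k])
      = map (\<lambda>j. if cs ! j = i then 0 else v ! i) [0..<k]"
    using i assms(4) by (simp add: nth_list_update)
  \<comment> \<open>since \<open>cs\<close> is distinct, at most one argument has been zeroed at coordinate \<open>i\<close>\<close>
  obtain h where "\<forall>j<k. j \<noteq> h \<longrightarrow> cs ! j \<noteq> i"
    using assms(2,3) by (metis nth_eq_iff_index_eq)
  then have "cube_fn (map (\<lambda>j. if cs ! j = i then 0 else v ! i) [0..<k]) = v ! i"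
    using assms(1,4,5) i by (intro cube_fn_one_hole[where h = h]) (auto intro: nth_mem)
  then show "pointwise cube_op 1 n (map (\<lambda>j. v[cs ! j := 0]) [0..<k]) ! i = v ! i"
    unfolding nth_pointwise[OF i] column by (simp add: cube_op_def)
qed (use assms(4) in simp)

lemma card_support_update_zero:
  fixes v :: "'a::zero list"
  assumes "c < length v" "v ! c \<noteq> 0"
  shows "card {i. i < length v \<and> v[c := 0] ! i \<noteq> 0} < card {i. i < length v \<and> v ! i \<noteq> 0}"
proof -
  have "{i. i < length v \<and> v[c := 0] ! i \<noteq> 0} = {i. i < length v \<and> v ! i \<noteq> 0} - {c}"
    using assms(1) by (auto simp: nth_list_update)
  moreover have "c \<in> {i. i < length v \<and> v ! i \<noteq> 0}" using assms by simp
  ultimately show ?thesis by (simp only:) (rule card_Diff1_less, simp_all)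
qed

lemma sparse_vectors_generate_cube:
  assumes "2 \<le> k"
  shows "generated {0,1} (cube_ar k) cube_op n (sparse_vectors {0,1,2} 0 (k - 1) n)
           = power_carrier {0,1,2} n"
    (is "generated _ _ _ _ ?S = _")
proof
  show "generated {0,1} (cube_ar k) cube_op n ?S \<subseteq> power_carrier {0,1,2} n"
    by (rule generated_subset_power_carrier[OF is_algebra_cube]) (auto simp: sparse_vectors_def)
  show "power_carrier {0,1,2} n \<subseteq> generated {0,1} (cube_ar k) cube_op n ?S"
  proof
    fix v :: "nat list" assume "v \<in> power_carrier {0,1,2} n"
    then show "v \<in> generated {0,1} (cube_ar k) cube_op n ?S"
    proof (induction "card {i. i < n \<and> v ! i \<noteq> 0}" arbitrary: v rule: less_induct)
      case less
      define N where "N = {i. i < n \<and> v ! i \<noteq> 0}"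
      have len: "length v = n" and set_v: "set v \<subseteq> {0,1,2}"
        using less.prems by (auto simp: power_carrier_def)
      show ?case
      proof (cases "card N \<le> k - 1")
        case True
        then show ?thesis using less.prems by (auto intro: gen_base simp: sparse_vectors_def N_def)
      next
        case False
        then have "k \<le> card N" by simp
        then obtain C where C: "C \<subseteq> N" "card C = k" "finite C"
          by (rule obtain_subset_with_card_n)
        define cs where "cs = sorted_list_of_set C"
        have cs: "distinct cs" "length cs = k" "set cs \<subseteq> N"
          using C by (simp_all add: cs_def)
        have "u \<in> generated {0,1} (cube_ar k) cube_op n ?S"
          if u_mem: "u \<in> set (map (\<lambda>j. v[cs ! j := 0]) [0..<k])" for u
        proof -
          obtain j where j: "j < k" "u = v[cs ! j := 0]" using u_mem by auto
          then have "cs ! j \<in> N" using cs nth_mem by blast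
          then have "card {i. i < n \<and> u ! i \<noteq> 0} < card N"
            using card_support_update_zero[of "cs ! j" v] j(2) len by (simp add: N_def)
          moreover have "u \<in> power_carrier {0,1,2} n"
            using j(2) len set_v set_update_subset_insert[of v "cs ! j" 0]
            by (auto simp: power_carrier_def)
          ultimately show ?thesis using less.hyps N_def by blast
        qed
        then have "pointwise cube_op 1 n (map (\<lambda>j. v[cs ! j := 0]) [0..<k])
                     \<in> generated {0,1} (cube_ar k) cube_op n ?S"
          by (intro pointwise_in_generated) (auto simp: cube_ar_def)
        then show ?thesis using pointwise_cube_zero_out[OF assms cs(1,2) len set_v] by simp
      qed
    qed
  qed
qed

definition char_vector :: "nat \<Rightarrow> nat set \<Rightarrow> nat list" where
  "char_vector n T = map (\<lambda>i. if i \<in> T then 1 else 0) [0..<n]"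

lemma char_vector_in_power_carrier: "char_vector n T \<in> power_carrier {0,1,2} n"
  by (auto simp: char_vector_def power_carrier_def)

lemma deviation_from_char_vector:
  assumes eq: "pointwise cube_op 1 n vs = char_vector n T"
    and u: "u \<in> set vs" "length u = n" "u \<noteq> char_vector n T"
  shows "\<exists>c\<in>T. u ! c \<noteq> 1"
proof -
  have "\<exists>c<n. u ! c \<noteq> char_vector n T ! c"
  proof (rule ccontr)
    assume "\<not> (\<exists>c<n. u ! c \<noteq> char_vector n T ! c)"
    then have "u = char_vector n T"
      using u(2) by (intro nth_equalityI) (simp_all add: char_vector_def)
    then show False using u(3) by contradiction
  qed
  then obtain c where c: "c < n" "u ! c \<noteq> char_vector n T ! c" by blast
  show ?thesis
  proof (cases "c \<in> T")
    case True
    then show ?thesis using c by (auto simp: char_vector_def)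
  next
    case False
    then have "cube_fn (map (\<lambda>u. u ! c) vs) = 0"
      using arg_cong[OF eq, of "\<lambda>w. w ! c"] c(1) by (simp add: char_vector_def cube_op_def)
    then have "\<forall>x\<in>set (map (\<lambda>u. u ! c) vs). x = 0"
      by (simp add: cube_fn_def split: if_splits)
    moreover have "u ! c \<in> set (map (\<lambda>u. u ! c) vs)" using u(1) by simp
    ultimately have "u ! c = 0" by blast
    then show ?thesis using c False by (simp add: char_vector_def)
  qed
qed

lemma char_vector_not_pointwise_cube:
  assumes T: "T \<subseteq> {..<n}" "T \<noteq> {}" "card T < k"
    and f: "f \<in> {0,1}" "length vs = cube_ar k f"
    and vs: "\<forall>u\<in>set vs. length u = n" "char_vector n T \<notin> set vs"
  shows "pointwise cube_op f n vs \<noteq> char_vector n T"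
proof
  assume eq: "pointwise cube_op f n vs = char_vector n T"
  have column: "cube_op f (map (\<lambda>u. u ! c) vs) = (if c \<in> T then 1 else 0)" if "c < n" for c
    using arg_cong[OF eq, of "\<lambda>w. w ! c"] that by (simp add: char_vector_def)
  show False
  proof (cases "f = 0")
    case True
    obtain t where "t \<in> T" using T(2) by blast
    then show False using column[of t] T(1) True by (auto simp: cube_op_def)
  next
    case False
    then have "f = 1" "length vs = k" using f by (auto simp: cube_ar_def)
    have bad_coordinate: "\<exists>c\<in>T. vs ! j ! c \<noteq> 1" if "j < k" for j
      using eq \<open>f = 1\<close> vs that \<open>length vs = k\<close>
      by (intro deviation_from_char_vector) (auto, metis nth_mem)
    define \<phi> where "\<phi> j = (SOME c. c \<in> T \<and> vs ! j ! c \<noteq> 1)" for j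
    have \<phi>: "\<phi> j \<in> T \<and> vs ! j ! \<phi> j \<noteq> 1" if "j < k" for j
      unfolding \<phi>_def by (rule someI_ex[OF bad_coordinate[OF that, unfolded Bex_def]])
    have "\<not> inj_on \<phi> {..<k}"
    proof
      assume "inj_on \<phi> {..<k}"
      then have "card {..<k} \<le> card T"
        using \<phi> finite_subset[OF T(1)] by (intro card_inj_on_le) auto
      then show False using T(3) by simp
    qed
    then obtain j1 j2 where j: "j1 < k" "j2 < k" "j1 \<noteq> j2" "\<phi> j1 = \<phi> j2"
      unfolding inj_on_def by blast
    define c where "c = \<phi> j1"
    define col where "col = map (\<lambda>u. u ! c) vs"
    have "c \<in> T" "vs ! j1 ! c \<noteq> 1" using \<phi>[OF j(1)] by (simp_all add: c_def)
    moreover have "vs ! j2 ! c \<noteq> 1" using \<phi>[OF j(2)] j(4) by (simp add: c_def)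
    ultimately have "{j1, j2} \<subseteq> {j. j < length col \<and> col ! j \<noteq> 1}"
      using j(1,2) \<open>length vs = k\<close> by (auto simp: col_def)
    then have "card {j1, j2} \<le> length (filter (\<lambda>x. x \<noteq> 1) col)"
      unfolding length_filter_conv_card by (rule card_mono[rotated]) simp
    moreover have "cube_fn col = 1"
      using column[of c] \<open>c \<in> T\<close> T(1) \<open>f = 1\<close> by (auto simp: col_def cube_op_def)
    ultimately show False using j(3) by (simp add: cube_fn_def split: if_splits)
  qed
qed

lemma char_vector_mem_generating_set:
  assumes "T \<subseteq> {..<n}" "T \<noteq> {}" "card T < k"
    and "S \<subseteq> power_carrier {0,1,2} n"
    and "generated {0,1} (cube_ar k) cube_op n S = power_carrier {0,1,2} n"
  shows "char_vector n T \<in> S"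
proof (rule mem_generating_set_if_not_pointwise)
  show "char_vector n T \<in> generated {0,1} (cube_ar k) cube_op n S"
    using assms(5) char_vector_in_power_carrier by blast
  fix f vs
  assume "f \<in> {0,1}" "length vs = cube_ar k f"
    "set vs \<subseteq> generated {0,1} (cube_ar k) cube_op n S" "char_vector n T \<notin> set vs"
  moreover from this have "\<forall>u\<in>set vs. length u = n"
    using assms(5) by (auto simp: power_carrier_def)
  ultimately show "pointwise cube_op f n vs \<noteq> char_vector n T"
    using assms(1-3) by (intro char_vector_not_pointwise_cube) auto
qed

lemma binomial_le_d_gen_cube:
  assumes "2 \<le> k"
  shows "n choose (k - 1) \<le> d_gen {0,1,2} {0,1} (cube_ar k) cube_op n"
proof -
  let ?Subsets = "{T. T \<subseteq> {..<n} \<and> card T = k - 1}"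
  have "inj_on (char_vector n) ?Subsets"
  proof
    fix T T' assume T: "T \<in> ?Subsets" "T' \<in> ?Subsets"
      and eq: "char_vector n T = char_vector n T'"
    have "i \<in> T \<longleftrightarrow> i \<in> T'" if "i < n" for i
      using arg_cong[OF eq, of "\<lambda>w. w ! i"] that by (simp add: char_vector_def split: if_splits)
    then show "T = T'" using T by auto
  qed
  then have "n choose (k - 1) = card (char_vector n ` ?Subsets)"
    by (simp add: card_image n_subsets)
  also have "\<dots> \<le> d_gen {0,1,2} {0,1} (cube_ar k) cube_op n"
  proof (rule card_le_d_gen[OF _ is_algebra_cube], simp)
    fix S assume "S \<subseteq> power_carrier {0,1,2} n"
      "generated {0,1} (cube_ar k) cube_op n S = power_carrier {0,1,2} n"
    then show "char_vector n ` ?Subsets \<subseteq> S"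
      using assms by (auto intro!: char_vector_mem_generating_set)
  qed
  finally show ?thesis .
qed

lemma d_gen_cube_le:
  assumes "2 \<le> k"
  shows "d_gen {0,1,2} {0,1} (cube_ar k) cube_op n \<le> (3 * n + 1) ^ (k - 1)"
proof -
  have "d_gen {0,1,2} {0,1} (cube_ar k) cube_op n \<le> card (sparse_vectors {0,1,2::nat} 0 (k - 1) n)"
    using sparse_vectors_generate_cube[OF assms] finite_power_carrier[of "{0,1,2::nat}" n]
    by (intro d_gen_le_card) (auto simp: sparse_vectors_def intro: finite_subset)
  also have "\<dots> \<le> (3 * n + 1) ^ (k - 1)"
    using card_sparse_vectors_le[of "{0,1,2::nat}" 0 "k - 1" n] by (simp add: eval_nat_numeral)
  finally show ?thesis .
qed

theorem theorem5p8:
  fixes k :: nat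
  assumes "k \<ge> 2"
  shows "\<exists>(A :: nat set) (Sig :: nat set) (ar :: nat \<Rightarrow> nat) (op :: nat \<Rightarrow> nat list \<Rightarrow> nat).
           is_algebra A Sig ar op \<and> finite A \<and>
           has_1pointed_cube_term k A Sig ar op \<and>
           (\<lambda>n. real (d_gen A Sig ar op n)) \<in> \<Theta>(\<lambda>n. real n ^ (k - 1))"
proof (intro exI conjI)
  show "is_algebra {0,1,2} {0,1} (cube_ar k) cube_op" by (rule is_algebra_cube)
  show "finite {0,1,2::nat}" by simp
  show "has_1pointed_cube_term k {0,1,2} {0,1} (cube_ar k) cube_op"
    using assms by (rule has_1pointed_cube_term_cube)
  show "(\<lambda>n. real (d_gen {0,1,2} {0,1} (cube_ar k) cube_op n)) \<in> \<Theta>(\<lambda>n. real n ^ (k - 1))"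
    using binomial_le_d_gen_cube[OF assms] d_gen_cube_le[OF assms]
    by (rule bigtheta_power_if_binomial_bounds)
qed

end
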